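(* Let $U\subset\mathbb{H}^n$ be a domain. For any $v\in C^\infty(U)$, $$\Big||D_0^2v\,Xv|^2-\Delta_0v\,\Delta_{0,\infty}v-\frac12\big[|D_0^2v|^2-(\Delta_0v)^2\big]|Xv|^2\Big|\le(n-1)\Big[|D_0^2v|^2|Xv|^2-|D_0^2v\,Xv|^2\Big]\quad\text{in } U.$$
   Context: The Heisenberg group $\mathbb{H}^n$ is $\mathbb{R}^{2n}\times\mathbb{R}$ with the group law $(x,t)\cdot(x',t')=(x+x',\,t+t'-\frac12\sum_{i=1}^n[x_ix'_{i+n}-x_{i+n}x'_i])$, with left-invariant vector fields $X_i=\partial_{x_i}-\frac{x_{i+n}}{2}\partial_t$, $X_{i+n}=\partial_{x_{i+n}}+\frac{x_i}{2}\partial_t$ ($i=1,\dots,n$). For $v$, $Xv=(X_1v,\dots,X_{2n}v)$ (a column vector), $|Xv|$ its Euclidean norm, $\Delta_0v=\sum_{i=1}^{2n}X_iX_iv$, $D_0^2v=\big(\frac12[X_iX_jv+X_jX_iv]\big)_{i,j=1}^{2n}$ with Frobenius norm $|D_0^2v|$, $D_0^2v\,Xv$ the matrix-vector product, and $\Delta_{0,\infty}v=\sum_{i,j=1}^{2n}X_iv\,X_iX_jv\,X_jv=(Xv)^TD_0^2v\,Xv$. *)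

theory Defs
  imports "HOL-Analysis.Analysis"
begin

text \<open>Points of the Heisenberg group H^n, n = CARD('n), are ((x, y), t) with
  x = (x_1..x_n), y = (x_{n+1}..x_{2n}) in R^n and t in R.\<close>
type_synonym 'n heis = "((real^'n) \<times> (real^'n)) \<times> real"

fun Ck :: "nat \<Rightarrow> 'a::euclidean_space set \<Rightarrow> ('a \<Rightarrow> real) \<Rightarrow> bool" where
  "Ck 0 U f = continuous_on U f"
| "Ck (Suc k) U f = (f differentiable_on U \<and>
      (\<forall>b\<in>Basis. Ck k U (\<lambda>p. frechet_derivative f (at p) b)))"

definition smooth_on :: "'a::euclidean_space set \<Rightarrow> ('a \<Rightarrow> real) \<Rightarrow> bool" where
  "smooth_on U f \<longleftrightarrow> (\<forall>k. Ck k U f)"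

definition pd :: "'a::real_normed_vector \<Rightarrow> ('a \<Rightarrow> real) \<Rightarrow> 'a \<Rightarrow> real" where
  "pd e f p = frechet_derivative f (at p) e"

definition ex :: "'n::finite \<Rightarrow> 'n heis" where "ex i = ((axis i 1, 0), 0)"
definition ey :: "'n::finite \<Rightarrow> 'n heis" where "ey i = ((0, axis i 1), 0)"
definition et :: "'n::finite heis" where "et = ((0, 0), 1)"

text \<open>Left-invariant horizontal vector fields: Inl i gives X_i, Inr i gives X_{i+n}.\<close>
fun hX :: "('n::finite + 'n) \<Rightarrow> ('n heis \<Rightarrow> real) \<Rightarrow> 'n heis \<Rightarrow> real" where
  "hX (Inl i) f p = pd (ex i) f p - (snd (fst p) $ i) / 2 * pd et f p"
| "hX (Inr i) f p = pd (ey i) f p + (fst (fst p) $ i) / 2 * pd et f p"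

definition symhess :: "('n::finite heis \<Rightarrow> real) \<Rightarrow> 'n heis \<Rightarrow> ('n + 'n) \<Rightarrow> ('n + 'n) \<Rightarrow> real" where
  "symhess v p i j = (hX i (hX j v) p + hX j (hX i v) p) / 2"

definition subLap :: "('n::finite heis \<Rightarrow> real) \<Rightarrow> 'n heis \<Rightarrow> real" where
  "subLap v p = (\<Sum>i\<in>UNIV. hX i (hX i v) p)"

definition infLap :: "('n::finite heis \<Rightarrow> real) \<Rightarrow> 'n heis \<Rightarrow> real" where
  "infLap v p = (\<Sum>i\<in>UNIV. \<Sum>j\<in>UNIV. hX i v p * hX i (hX j v) p * hX j v p)"

definition gradsq :: "('n::finite heis \<Rightarrow> real) \<Rightarrow> 'n heis \<Rightarrow> real" where
  "gradsq v p = (\<Sum>i\<in>UNIV. (hX i v p)^2)"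

definition hesssq :: "('n::finite heis \<Rightarrow> real) \<Rightarrow> 'n heis \<Rightarrow> real" where
  "hesssq v p = (\<Sum>i\<in>UNIV. \<Sum>j\<in>UNIV. (symhess v p i j)^2)"

definition hessgradsq :: "('n::finite heis \<Rightarrow> real) \<Rightarrow> 'n heis \<Rightarrow> real" where
  "hessgradsq v p = (\<Sum>i\<in>UNIV. (\<Sum>j\<in>UNIV. symhess v p i j * hX j v p)^2)"

end

theory Submission
  imports Defs
begin

text \<open>Let g \<noteq> 0 and D = |g|^4 PSP, with P the orthogonal projection onto the complement of g.
  Since Dg = 0, Cauchy-Schwarz for D against |g|^2 I - g g^T (squared Frobenius norm
  |g|^4 (2n - 1)) gives (tr D)^2 \<le> (2n - 1) |D|^2. After multiplication by 2 |g|^6 the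
  left-hand side of the claim becomes (tr D)^2 - |D|^2 and the right-hand side becomes
  (2n - 2) (|D|^2 + |g|^4 (|g|^2 |Sg|^2 - (g^T S g)^2)), with the last term nonnegative by
  Cauchy-Schwarz again; both estimates of |(tr D)^2 - |D|^2| follow for n \<ge> 2. For n = 1 the
  left-hand side vanishes identically by the Cayley-Hamilton theorem for 2 \<times> 2 matrices.\<close>

definition outer :: "real^'m \<Rightarrow> real^'n \<Rightarrow> real^'n^'m"
  where "outer x y = (\<chi> i j. x$i * y$j)"

lemma outer_inner: "outer x y \<bullet> A = x \<bullet> (A *v y)"
  by (simp add: outer_def inner_vec_def matrix_vector_mult_def sum_distrib_left mult_ac)

lemma outer_mult_vec: "outer x y *v z = (y \<bullet> z) *\<^sub>R x"
  by (simp add: outer_def vec_eq_iff matrix_vector_mult_def inner_vec_def sum_distrib_left mult_ac)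

lemma trace_outer: "trace (outer x y) = x \<bullet> y"
  by (simp add: outer_def trace_def inner_vec_def)

lemma trace_scaleR: "trace (c *\<^sub>R A) = c * trace A"
  by (simp add: trace_def sum_distrib_left)

lemma mat_inner: "mat c \<bullet> (A :: real^'m^'m) = c * trace A"
  by (simp add: mat_def inner_vec_def trace_def sum_distrib_left
      if_distrib[where f = "\<lambda>a. a * b" for b] cong: if_cong)

lemma inner_mult_vec_symmetric:
  fixes S :: "real^'m^'m"
  assumes "transpose S = S"
  shows "x \<bullet> (S *v y) = (S *v x) \<bullet> y"
proof -
  have "x \<bullet> (S *v y) = (transpose S *v x) \<bullet> y"
    by (simp add: dot_lmul_matrix)
  then show ?thesis
    using assms by simp
qed

lemma trace_square_le_if_quadratic_form_vanishes:
  fixes A :: "real^'m^'m"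
  assumes "g \<noteq> 0" and "g \<bullet> (A *v g) = 0"
  shows "(trace A)\<^sup>2 \<le> (real CARD('m) - 1) * (A \<bullet> A)"
proof -
  define G where "G = g \<bullet> g"
  define Q where "Q = G *\<^sub>R mat 1 - outer g g"
  have "G > 0"
    using assms(1) by (simp add: G_def)
  have "Q *v g = 0"
    by (simp add: Q_def G_def matrix_vector_mult_diff_rdistrib scaleR_matrix_vector_assoc[symmetric]
        outer_mult_vec)
  then have QQ: "Q \<bullet> Q = G\<^sup>2 * (real CARD('m) - 1)"
    by (simp add: Q_def inner_diff_left mat_inner outer_inner trace_sub trace_scaleR trace_I
        trace_outer G_def power2_eq_square right_diff_distrib)
  have QA: "Q \<bullet> A = G * trace A"
    using assms(2) by (simp add: Q_def inner_diff_left mat_inner outer_inner)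
  have "(G * trace A)\<^sup>2 \<le> G\<^sup>2 * (real CARD('m) - 1) * (A \<bullet> A)"
    using Cauchy_Schwarz_ineq[of Q A] by (simp add: QA QQ)
  then show ?thesis
    using \<open>G > 0\<close> by (simp add: power_mult_distrib mult.assoc)
qed

text \<open>This is D = |g|^4 PSP, multiplied out so that no division by |g|^2 occurs.\<close>

definition perp_compression :: "real^'m \<Rightarrow> real^'m^'m \<Rightarrow> real^'m^'m" where
  "perp_compression g S = (g \<bullet> g)\<^sup>2 *\<^sub>R S - (g \<bullet> g) *\<^sub>R (outer g (S *v g) + outer (S *v g) g)
     + (g \<bullet> (S *v g)) *\<^sub>R outer g g"

lemma perp_compression_mult_vec:
  fixes S :: "real^'m^'m"
  assumes "transpose S = S"
  shows "perp_compression g S *v g = 0"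
  using inner_mult_vec_symmetric[OF assms, of g g]
  by (simp add: perp_compression_def matrix_vector_mult_add_rdistrib matrix_vector_mult_diff_rdistrib
      scaleR_matrix_vector_assoc[symmetric] outer_mult_vec inner_commute[of "S *v g"] power2_eq_square
      algebra_simps)

lemma transpose_perp_compression:
  fixes S :: "real^'m^'m"
  assumes "transpose S = S"
  shows "transpose (perp_compression g S) = perp_compression g S"
proof -
  have "S $ j $ i = S $ i $ j" for i j
    using assms by (metis transpose_def vec_lambda_beta)
  then show ?thesis
    by (simp add: perp_compression_def transpose_def outer_def vec_eq_iff mult.commute)
qed

lemma trace_perp_compression:
  "trace (perp_compression g S) = (g \<bullet> g) * ((g \<bullet> g) * trace S - g \<bullet> (S *v g))"
  by (simp add: perp_compression_def trace_add trace_sub trace_scaleR trace_outer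
      inner_commute[of "S *v g"] power2_eq_square algebra_simps)

lemma inner_perp_compression_self:
  fixes S :: "real^'m^'m"
  assumes "transpose S = S"
  shows "perp_compression g S \<bullet> perp_compression g S
    = (g \<bullet> g)\<^sup>2
      * ((g \<bullet> g)\<^sup>2 * (S \<bullet> S) - 2 * (g \<bullet> g) * ((S *v g) \<bullet> (S *v g)) + (g \<bullet> (S *v g))\<^sup>2)"
proof -
  define D where "D = perp_compression g S"
  have "D *v g = 0"
    unfolding D_def using assms by (rule perp_compression_mult_vec)
  moreover have "transpose D = D"
    unfolding D_def using assms by (rule transpose_perp_compression)
  ultimately have outer_D: "outer x g \<bullet> D = 0" "outer g x \<bullet> D = 0" for x
    using inner_mult_vec_symmetric[of D g x] by (simp_all add: outer_inner)
  have "D \<bullet> D = perp_compression g S \<bullet> D"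
    by (simp only: D_def)
  also have "\<dots> = (g \<bullet> g)\<^sup>2 * (D \<bullet> S)"
    by (simp add: perp_compression_def[of g S] inner_add_left inner_diff_left outer_D
        inner_commute[of S D])
  also have "D \<bullet> S = (g \<bullet> g)\<^sup>2 * (S \<bullet> S) - 2 * (g \<bullet> g) * ((S *v g) \<bullet> (S *v g))
      + (g \<bullet> (S *v g))\<^sup>2"
    using inner_mult_vec_symmetric[OF assms, of g "S *v g"]
    by (simp add: D_def perp_compression_def inner_add_left inner_diff_left outer_inner
        inner_commute[of "S *v g" g] power2_eq_square)
  finally show ?thesis
    unfolding D_def .
qed

lemma trace_perp_compression_bound:
  fixes S :: "real^'m^'m"
  assumes "transpose S = S"
  shows "((g \<bullet> g) * trace S - g \<bullet> (S *v g))\<^sup>2 \<le> (real CARD('m) - 1)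
    * ((g \<bullet> g)\<^sup>2 * (S \<bullet> S) - 2 * (g \<bullet> g) * ((S *v g) \<bullet> (S *v g)) + (g \<bullet> (S *v g))\<^sup>2)"
proof (cases "g = 0")
  case False
  have "(trace (perp_compression g S))\<^sup>2
      \<le> (real CARD('m) - 1) * (perp_compression g S \<bullet> perp_compression g S)"
    using False perp_compression_mult_vec[OF assms, of g]
    by (intro trace_square_le_if_quadratic_form_vanishes[of g]) simp_all
  then show ?thesis
    using False by (simp add: trace_perp_compression inner_perp_compression_self[OF assms]
        power_mult_distrib mult.left_commute[of "real CARD('m) - 1"])
qed simp

lemma perp_compression_norm_nonneg:
  fixes S :: "real^'m^'m"
  assumes "transpose S = S"
  shows "0 \<le> (g \<bullet> g)\<^sup>2 * (S \<bullet> S) - 2 * (g \<bullet> g) * ((S *v g) \<bullet> (S *v g))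
    + (g \<bullet> (S *v g))\<^sup>2"
proof (cases "g = 0")
  case False
  have "0 \<le> perp_compression g S \<bullet> perp_compression g S"
    by simp
  then show ?thesis
    using False by (simp add: inner_perp_compression_self[OF assms] zero_le_mult_iff)
qed simp

lemma symmetric_2x2_quadratic_identity:
  fixes S :: "real^'m^'m"
  assumes "transpose S = S" and "CARD('m) = 2"
  shows "(S *v g) \<bullet> (S *v g) - trace S * (g \<bullet> (S *v g))
    = 1/2 * (S \<bullet> S - (trace S)\<^sup>2) * (g \<bullet> g)"
proof -
  obtain x y :: 'm where UNIV_eq: "UNIV = {x, y}" and "x \<noteq> y"
    using assms(2) card_2_iff by metis
  have "S $ x $ y = S $ y $ x"
    using assms(1) by (metis transpose_def vec_lambda_beta)
  then show ?thesis
    using \<open>x \<noteq> y\<close> by (simp add: inner_vec_def matrix_vector_mult_def trace_def UNIV_eq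
        power2_eq_square algebra_simps)
qed

lemma symmetric_matrix_quadratic_bound:
  fixes S :: "real^'m^'m" and g :: "real^'m"
  assumes "transpose S = S" and "2 \<le> CARD('m)"
  shows "\<bar>(S *v g) \<bullet> (S *v g) - trace S * (g \<bullet> (S *v g))
            - 1/2 * (S \<bullet> S - (trace S)\<^sup>2) * (g \<bullet> g)\<bar>
         \<le> (real CARD('m) / 2 - 1) * ((S \<bullet> S) * (g \<bullet> g) - (S *v g) \<bullet> (S *v g))"
proof (cases "CARD('m) = 2 \<or> g = 0")
  case True
  then show ?thesis using symmetric_2x2_quadratic_identity[OF assms(1)] by auto
next
  case False
  define G a b where "G = g \<bullet> g" and "a = (S *v g) \<bullet> (S *v g)" and "b = g \<bullet> (S *v g)"
  define c f k where "c = G * trace S - b" and "f = G\<^sup>2 * (S \<bullet> S) - 2 * G * a + b\<^sup>2"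
    and "k = real CARD('m) - 2"
  have "0 < G" and "1 \<le> k"
    using False assms(2) by (simp_all add: G_def k_def)
  have c_bound: "c\<^sup>2 \<le> (k + 1) * f"
    using trace_perp_compression_bound[OF assms(1), of g]
    by (simp add: c_def f_def G_def a_def b_def k_def)
  have "0 \<le> f"
    using perp_compression_norm_nonneg[OF assms(1), of g] by (simp add: f_def G_def a_def b_def)
  have "b\<^sup>2 \<le> G * a"
    using Cauchy_Schwarz_ineq[of g "S *v g"] by (simp add: G_def a_def b_def)
  have "\<bar>c\<^sup>2 - f\<bar> \<le> k * (f + (G * a - b\<^sup>2))"
  proof -
    have "0 \<le> f + (G * a - b\<^sup>2)"
      using \<open>0 \<le> f\<close> \<open>b\<^sup>2 \<le> G * a\<close> by linarith
    have "c\<^sup>2 - f \<le> k * f"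
      using c_bound by (simp add: algebra_simps)
    also have "\<dots> \<le> k * (f + (G * a - b\<^sup>2))"
      using \<open>1 \<le> k\<close> \<open>b\<^sup>2 \<le> G * a\<close> by (intro mult_left_mono) simp_all
    finally have "c\<^sup>2 - f \<le> k * (f + (G * a - b\<^sup>2))" .
    moreover have "f - c\<^sup>2 \<le> f + (G * a - b\<^sup>2)"
      using \<open>b\<^sup>2 \<le> G * a\<close> zero_le_power2[of c] by linarith
    moreover have "\<dots> \<le> k * (f + (G * a - b\<^sup>2))"
      using mult_right_mono[OF \<open>1 \<le> k\<close> \<open>0 \<le> f + (G * a - b\<^sup>2)\<close>] by simp
    ultimately show ?thesis by linarith
  qed
  also have "c\<^sup>2 - f = 2 * G * (a - trace S * b - 1/2 * (S \<bullet> S - (trace S)\<^sup>2) * G)"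
    by (simp add: c_def f_def power2_eq_square algebra_simps)
  also have "k * (f + (G * a - b\<^sup>2)) = 2 * G * ((real CARD('m) / 2 - 1) * ((S \<bullet> S) * G - a))"
    by (simp add: f_def k_def power2_eq_square field_simps)
  finally show ?thesis
    using \<open>0 < G\<close> by (simp add: G_def a_def b_def abs_mult)
qed

lemma infLap_eq_symhess:
  "infLap v p = (\<Sum>i\<in>UNIV. \<Sum>j\<in>UNIV. hX i v p * symhess v p i j * hX j v p)"
proof -
  have "(\<Sum>i\<in>UNIV. \<Sum>j\<in>UNIV. hX i v p * hX j (hX i v) p * hX j v p) = infLap v p"
    unfolding infLap_def by (subst sum.swap) (simp add: mult_ac)
  then show ?thesis
    by (simp add: infLap_def symhess_def sum.distrib sum_divide_distrib[symmetric] algebra_simps)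
qed

theorem lemma3p3:
  fixes U :: "'n::finite heis set" and v :: "'n heis \<Rightarrow> real"
  assumes "open U" and "connected U" and "smooth_on U v" and "p \<in> U"
  shows "\<bar>hessgradsq v p - subLap v p * infLap v p
            - (1/2) * (hesssq v p - (subLap v p)^2) * gradsq v p\<bar>
         \<le> (real CARD('n) - 1) * (hesssq v p * gradsq v p - hessgradsq v p)"
proof -
  define S :: "real^('n + 'n)^('n + 'n)" where "S = (\<chi> i j. symhess v p i j)"
  define g :: "real^('n + 'n)" where "g = (\<chi> i. hX i v p)"
  have "transpose S = S"
    by (simp add: S_def transpose_def symhess_def add.commute)
  have hessgradsq_eq: "hessgradsq v p = (S *v g) \<bullet> (S *v g)"
    by (simp add: hessgradsq_def S_def g_def inner_vec_def matrix_vector_mult_def power2_eq_square)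
  have subLap_eq: "subLap v p = trace S"
    by (simp add: subLap_def trace_def S_def symhess_def)
  have infLap_eq: "infLap v p = g \<bullet> (S *v g)"
    by (simp add: infLap_eq_symhess S_def g_def inner_vec_def matrix_vector_mult_def
        sum_distrib_left mult_ac)
  have hesssq_eq: "hesssq v p = S \<bullet> S" and gradsq_eq: "gradsq v p = g \<bullet> g"
    by (simp_all add: hesssq_def gradsq_def S_def g_def inner_vec_def power2_eq_square)
  have card_sum: "CARD('n + 'n) = 2 * CARD('n)" and "0 < CARD('n)"
    by (simp_all add: card_gt_0_iff)
  then have card_ge_2: "2 \<le> CARD('n + 'n)"
    by linarith
  have factor_eq: "real CARD('n + 'n) / 2 - 1 = real CARD('n) - 1"
    using card_sum by simp
  from symmetric_matrix_quadratic_bound[OF \<open>transpose S = S\<close> card_ge_2, of g] show ?thesis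
    unfolding hessgradsq_eq subLap_eq infLap_eq hesssq_eq gradsq_eq factor_eq .
qed

end
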